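(* (i) Let $L$ be a lattice, let $\gamma$ be a congruence relation of $L$, and let $K=L/\gamma$ be the quotient lattice, with canonical surjection $u\mapsto [u]_\gamma$. For every congruence relation $\alpha$ of $L$, the relation \[ \alpha/\gamma=\bigl\{([u]_\gamma,[v]_\gamma) \mid u,v\in L,\ (u,v)\in\alpha\bigr\} \] is a tolerance relation of $K$. (ii) Conversely, for every lattice $K$ and every tolerance relation $\tau$ of $K$, there exist a lattice $L$, congruence relations $\alpha$ and $\gamma$ of $L$, and a lattice isomorphism $\varphi\colon L/\gamma\to K$ such that \[ \tau=\varphi(\alpha/\gamma)=\bigl\{(\varphi(X),\varphi(Y)) \mid (X,Y)\in\alpha/\gamma\bigr\}. \]
   Context: A tolerance relation of a lattice $L$ is a binary relation $\rho\subseteq L\times L$ that is reflexive, symmetric, and has the Substitution Properties: if $(a,b)\in\rho$ and $(c,d)\in\rho$ then $(a\vee c,b\vee d)\in\rho$ and $(a\wedge c,b\wedge d)\in\rho$. A congruence relation is a transitive tolerance. $[u]_\gamma$ denotes the $\gamma$-class of $u$. *)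

theory Defs
  imports Main
begin

definition is_lattice :: "'a set \<Rightarrow> ('a \<Rightarrow> 'a \<Rightarrow> 'a) \<Rightarrow> ('a \<Rightarrow> 'a \<Rightarrow> 'a) \<Rightarrow> bool" where
  "is_lattice A j m \<longleftrightarrow>
     (\<forall>x\<in>A. \<forall>y\<in>A. j x y \<in> A \<and> m x y \<in> A) \<and>
     (\<forall>x\<in>A. \<forall>y\<in>A. j x y = j y x \<and> m x y = m y x) \<and>
     (\<forall>x\<in>A. \<forall>y\<in>A. \<forall>z\<in>A. j (j x y) z = j x (j y z) \<and> m (m x y) z = m x (m y z)) \<and>
     (\<forall>x\<in>A. \<forall>y\<in>A. j x (m x y) = x \<and> m x (j x y) = x)"

definition tolerance :: "'a set \<Rightarrow> ('a \<Rightarrow> 'a \<Rightarrow> 'a) \<Rightarrow> ('a \<Rightarrow> 'a \<Rightarrow> 'a) \<Rightarrow> ('a \<times> 'a) set \<Rightarrow> bool" where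
  "tolerance A j m \<rho> \<longleftrightarrow>
     \<rho> \<subseteq> A \<times> A \<and> (\<forall>x\<in>A. (x, x) \<in> \<rho>) \<and> sym \<rho> \<and>
     (\<forall>a b c d. (a, b) \<in> \<rho> \<longrightarrow> (c, d) \<in> \<rho> \<longrightarrow>
        (j a c, j b d) \<in> \<rho> \<and> (m a c, m b d) \<in> \<rho>)"

definition congruence :: "'a set \<Rightarrow> ('a \<Rightarrow> 'a \<Rightarrow> 'a) \<Rightarrow> ('a \<Rightarrow> 'a \<Rightarrow> 'a) \<Rightarrow> ('a \<times> 'a) set \<Rightarrow> bool" where
  "congruence A j m \<rho> \<longleftrightarrow> tolerance A j m \<rho> \<and> trans \<rho>"

text \<open>Operation induced on classes: for a congruence gamma,
  quot_op gamma f [x] [y] = [f x y].\<close>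

definition quot_op :: "('a \<times> 'a) set \<Rightarrow> ('a \<Rightarrow> 'a \<Rightarrow> 'a) \<Rightarrow> 'a set \<Rightarrow> 'a set \<Rightarrow> 'a set" where
  "quot_op \<gamma> f X Y = {z. \<exists>x\<in>X. \<exists>y\<in>Y. (f x y, z) \<in> \<gamma>}"

definition rel_quot :: "'a set \<Rightarrow> ('a \<times> 'a) set \<Rightarrow> ('a \<times> 'a) set \<Rightarrow> ('a set \<times> 'a set) set" where
  "rel_quot A \<alpha> \<gamma> = {(\<gamma> `` {u}, \<gamma> `` {v}) | u v. u \<in> A \<and> v \<in> A \<and> (u, v) \<in> \<alpha>}"

definition lattice_iso ::
  "'a set \<Rightarrow> ('a \<Rightarrow> 'a \<Rightarrow> 'a) \<Rightarrow> ('a \<Rightarrow> 'a \<Rightarrow> 'a) \<Rightarrow>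
   'b set \<Rightarrow> ('b \<Rightarrow> 'b \<Rightarrow> 'b) \<Rightarrow> ('b \<Rightarrow> 'b \<Rightarrow> 'b) \<Rightarrow> ('a \<Rightarrow> 'b) \<Rightarrow> bool" where
  "lattice_iso A j m B j' m' \<phi> \<longleftrightarrow> bij_betw \<phi> A B \<and>
     (\<forall>x\<in>A. \<forall>y\<in>A. \<phi> (j x y) = j' (\<phi> x) (\<phi> y) \<and> \<phi> (m x y) = m' (\<phi> x) (\<phi> y))"

end

theory Submission
  imports Defs
begin

text \<open>Part (i) holds because the substitution properties of \<open>\<alpha>\<close> pass to classes, the
operations of \<open>L/\<gamma>\<close> being computed on representatives.

For part (ii), let \<open>L\<close> be the set of triples \<open>[x, a, b]\<close> with \<open>a \<le> x \<le> b\<close> and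
\<open>(a, b) \<in> \<tau>\<close>, with componentwise operations; it is closed under them by the substitution
properties of \<open>\<tau>\<close>. Let \<open>\<gamma>\<close> and \<open>\<alpha>\<close> be the kernels of the homomorphisms
\<open>[x, a, b] \<mapsto> x\<close> and \<open>[x, a, b] \<mapsto> [a, b]\<close>. The first one is onto \<open>K\<close>, so
\<open>L/\<gamma> \<cong> K\<close>, and \<open>\<alpha>/\<gamma>\<close> becomes the relation "\<open>x\<close> and \<open>y\<close> lie in a common
interval \<open>[a, b]\<close> with \<open>(a, b) \<in> \<tau>\<close>". This is \<open>\<tau>\<close>: a tolerance is convex on such
intervals, and \<open>(x, y) \<in> \<tau>\<close> implies \<open>(x \<sqinter> y, x \<squnion> y) \<in> \<tau>\<close>.\<close>

definition lattice_hom ::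
  "'a set \<Rightarrow> ('a \<Rightarrow> 'a \<Rightarrow> 'a) \<Rightarrow> ('a \<Rightarrow> 'a \<Rightarrow> 'a) \<Rightarrow>
   ('b \<Rightarrow> 'b \<Rightarrow> 'b) \<Rightarrow> ('b \<Rightarrow> 'b \<Rightarrow> 'b) \<Rightarrow> ('a \<Rightarrow> 'b) \<Rightarrow> bool" where
  "lattice_hom A j m j' m' h \<longleftrightarrow>
     (\<forall>x\<in>A. \<forall>y\<in>A. h (j x y) = j' (h x) (h y) \<and> h (m x y) = m' (h x) (h y))"

definition kernel_rel :: "'a set \<Rightarrow> ('a \<Rightarrow> 'b) \<Rightarrow> ('a \<times> 'a) set" where
  "kernel_rel A h = {(u, v). u \<in> A \<and> v \<in> A \<and> h u = h v}"

definition class_map :: "('a \<Rightarrow> 'b) \<Rightarrow> 'a set \<Rightarrow> 'b" where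
  "class_map h X = h (SOME u. u \<in> X)"

lemma quot_op_Image:
  assumes "trans \<gamma>" and compatible: "\<And>a b c d. (a, b) \<in> \<gamma> \<Longrightarrow> (c, d) \<in> \<gamma> \<Longrightarrow> (f a c, f b d) \<in> \<gamma>"
    and "(u, u) \<in> \<gamma>" "(v, v) \<in> \<gamma>"
  shows "quot_op \<gamma> f (\<gamma> `` {u}) (\<gamma> `` {v}) = \<gamma> `` {f u v}"
proof (intro set_eqI iffI)
  fix z assume "z \<in> quot_op \<gamma> f (\<gamma> `` {u}) (\<gamma> `` {v})"
  then obtain x y where "(u, x) \<in> \<gamma>" "(v, y) \<in> \<gamma>" "(f x y, z) \<in> \<gamma>"
    unfolding quot_op_def by blast
  with compatible \<open>trans \<gamma>\<close> show "z \<in> \<gamma> `` {f u v}"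
    by (meson Image_singleton_iff transD)
next
  fix z assume "z \<in> \<gamma> `` {f u v}"
  with assms(3,4) show "z \<in> quot_op \<gamma> f (\<gamma> `` {u}) (\<gamma> `` {v})"
    unfolding quot_op_def by blast
qed

lemma congruence_quot_op_Image:
  assumes "congruence L j m \<gamma>" "u \<in> L" "v \<in> L"
  shows "quot_op \<gamma> j (\<gamma> `` {u}) (\<gamma> `` {v}) = \<gamma> `` {j u v}"
    and "quot_op \<gamma> m (\<gamma> `` {u}) (\<gamma> `` {v}) = \<gamma> `` {m u v}"
proof -
  have "trans \<gamma>" "(u, u) \<in> \<gamma>" "(v, v) \<in> \<gamma>"
    and "\<And>a b c d. (a, b) \<in> \<gamma> \<Longrightarrow> (c, d) \<in> \<gamma> \<Longrightarrow> (j a c, j b d) \<in> \<gamma> \<and> (m a c, m b d) \<in> \<gamma>"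
    using assms unfolding congruence_def tolerance_def by blast+
  then show "quot_op \<gamma> j (\<gamma> `` {u}) (\<gamma> `` {v}) = \<gamma> `` {j u v}"
    and "quot_op \<gamma> m (\<gamma> `` {u}) (\<gamma> `` {v}) = \<gamma> `` {m u v}"
    by (simp_all add: quot_op_Image)
qed

lemma tolerance_rel_quot:
  assumes "congruence L j m \<gamma>" "congruence L j m \<alpha>"
  shows "tolerance (L // \<gamma>) (quot_op \<gamma> j) (quot_op \<gamma> m) (rel_quot L \<alpha> \<gamma>)"
proof -
  have \<alpha>: "\<alpha> \<subseteq> L \<times> L" "\<forall>x\<in>L. (x, x) \<in> \<alpha>" "sym \<alpha>"
    "\<And>a b c d. (a, b) \<in> \<alpha> \<Longrightarrow> (c, d) \<in> \<alpha> \<Longrightarrow> (j a c, j b d) \<in> \<alpha> \<and> (m a c, m b d) \<in> \<alpha>"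
    using assms(2) unfolding congruence_def tolerance_def by blast+
  show ?thesis
    unfolding tolerance_def
  proof (intro conjI allI impI)
    show "rel_quot L \<alpha> \<gamma> \<subseteq> L // \<gamma> \<times> L // \<gamma>"
      unfolding rel_quot_def by (auto intro: quotientI)
    show "\<forall>X\<in>L // \<gamma>. (X, X) \<in> rel_quot L \<alpha> \<gamma>"
      unfolding rel_quot_def quotient_def using \<alpha>(2) by blast
    show "sym (rel_quot L \<alpha> \<gamma>)"
      unfolding rel_quot_def sym_def using \<alpha>(3) by (auto dest: symD)
  next
    fix A B C D assume "(A, B) \<in> rel_quot L \<alpha> \<gamma>" "(C, D) \<in> rel_quot L \<alpha> \<gamma>"
    then obtain a b c d where
      "(a, b) \<in> \<alpha>" "A = \<gamma> `` {a}" "B = \<gamma> `` {b}" "(c, d) \<in> \<alpha>" "C = \<gamma> `` {c}" "D = \<gamma> `` {d}"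
      unfolding rel_quot_def by blast
    moreover from this \<alpha>(1,4) have "(j a c, j b d) \<in> \<alpha>" "(m a c, m b d) \<in> \<alpha>"
      and "a \<in> L" "b \<in> L" "c \<in> L" "d \<in> L"
      by blast+
    moreover from this \<alpha>(1) have "j a c \<in> L" "j b d \<in> L" "m a c \<in> L" "m b d \<in> L"
      by blast+
    ultimately show "(quot_op \<gamma> j A C, quot_op \<gamma> j B D) \<in> rel_quot L \<alpha> \<gamma>"
      and "(quot_op \<gamma> m A C, quot_op \<gamma> m B D) \<in> rel_quot L \<alpha> \<gamma>"
      unfolding rel_quot_def using congruence_quot_op_Image[OF assms(1)] by fastforce+
  qed
qed

lemma congruence_kernel_rel:
  assumes "is_lattice L j m" "lattice_hom L j m j' m' h"
  shows "congruence L j m (kernel_rel L h)"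
  using assms unfolding congruence_def tolerance_def kernel_rel_def is_lattice_def lattice_hom_def
  by (auto simp: sym_def trans_def)

lemma kernel_rel_Image: "u \<in> L \<Longrightarrow> kernel_rel L h `` {u} = {v \<in> L. h v = h u}"
  unfolding kernel_rel_def by auto

lemma class_map_kernel_Image: "u \<in> L \<Longrightarrow> class_map h (kernel_rel L h `` {u}) = h u"
  unfolding class_map_def kernel_rel_Image
  by (rule someI2[of _ u]) auto

lemma lattice_iso_quotient_kernel:
  assumes L: "is_lattice L j m" and h: "lattice_hom L j m j' m' h" and onto: "h ` L = K"
  shows "lattice_iso (L // kernel_rel L h) (quot_op (kernel_rel L h) j) (quot_op (kernel_rel L h) m)
           K j' m' (class_map h)"
  unfolding lattice_iso_def bij_betw_def
proof (intro conjI ballI)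
  show "inj_on (class_map h) (L // kernel_rel L h)"
  proof (rule inj_onI)
    fix X Y assume "X \<in> L // kernel_rel L h" "Y \<in> L // kernel_rel L h" "class_map h X = class_map h Y"
    then obtain u v where "u \<in> L" "v \<in> L" "X = kernel_rel L h `` {u}" "Y = kernel_rel L h `` {v}" "h u = h v"
      by (auto elim!: quotientE simp: class_map_kernel_Image)
    then show "X = Y" by (simp add: kernel_rel_Image)
  qed
  show "class_map h ` (L // kernel_rel L h) = K"
  proof
    show "class_map h ` (L // kernel_rel L h) \<subseteq> K"
      using onto by (auto elim!: quotientE simp: class_map_kernel_Image)
    show "K \<subseteq> class_map h ` (L // kernel_rel L h)"
    proof
      fix x assume "x \<in> K"
      with onto obtain u where "u \<in> L" "x = h u" by blast
      then show "x \<in> class_map h ` (L // kernel_rel L h)"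
        by (metis class_map_kernel_Image image_eqI quotientI)
    qed
  qed
next
  fix X Y assume "X \<in> L // kernel_rel L h" "Y \<in> L // kernel_rel L h"
  then obtain u v where uv: "u \<in> L" "v \<in> L" "X = kernel_rel L h `` {u}" "Y = kernel_rel L h `` {v}"
    by (auto elim!: quotientE)
  moreover have "j u v \<in> L" "m u v \<in> L"
    using L uv unfolding is_lattice_def by auto
  ultimately show "class_map h (quot_op (kernel_rel L h) j X Y) = j' (class_map h X) (class_map h Y)"
    and "class_map h (quot_op (kernel_rel L h) m X Y) = m' (class_map h X) (class_map h Y)"
    using h congruence_quot_op_Image[OF congruence_kernel_rel[OF L h]]
    by (simp_all add: class_map_kernel_Image lattice_hom_def)
qed

lemma image_rel_quot_kernel:
  "{(class_map h X, class_map h Y) | X Y. (X, Y) \<in> rel_quot L \<alpha> (kernel_rel L h)}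
     = {(h u, h v) | u v. u \<in> L \<and> v \<in> L \<and> (u, v) \<in> \<alpha>}"
  (is "?image = ?pairs")
proof (intro equalityI subsetI)
  fix p assume "p \<in> ?image"
  then obtain u v where "u \<in> L" "v \<in> L" "(u, v) \<in> \<alpha>"
    and "p = (class_map h (kernel_rel L h `` {u}), class_map h (kernel_rel L h `` {v}))"
    unfolding rel_quot_def by blast
  then show "p \<in> ?pairs" by (auto simp: class_map_kernel_Image)
next
  fix p assume "p \<in> ?pairs"
  then obtain u v where uv: "u \<in> L" "v \<in> L" "(u, v) \<in> \<alpha>" and p: "p = (h u, h v)"
    by blast
  then have "(kernel_rel L h `` {u}, kernel_rel L h `` {v}) \<in> rel_quot L \<alpha> (kernel_rel L h)"
    unfolding rel_quot_def by blast
  moreover have "p = (class_map h (kernel_rel L h `` {u}), class_map h (kernel_rel L h `` {v}))"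
    using uv p by (simp add: class_map_kernel_Image)
  ultimately show "p \<in> ?image" by blast
qed

locale lattice_on =
  fixes K :: "'a set" and j m :: "'a \<Rightarrow> 'a \<Rightarrow> 'a"
  assumes is_lattice: "is_lattice K j m"
begin

abbreviation le :: "'a \<Rightarrow> 'a \<Rightarrow> bool" (infix \<open>\<sqsubseteq>\<close> 50)
  where "x \<sqsubseteq> y \<equiv> m x y = x"

lemma join_closed: "x \<in> K \<Longrightarrow> y \<in> K \<Longrightarrow> j x y \<in> K"
  and meet_closed: "x \<in> K \<Longrightarrow> y \<in> K \<Longrightarrow> m x y \<in> K"
  and join_commute: "x \<in> K \<Longrightarrow> y \<in> K \<Longrightarrow> j x y = j y x"
  and meet_commute: "x \<in> K \<Longrightarrow> y \<in> K \<Longrightarrow> m x y = m y x"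
  and join_assoc: "x \<in> K \<Longrightarrow> y \<in> K \<Longrightarrow> z \<in> K \<Longrightarrow> j (j x y) z = j x (j y z)"
  and meet_assoc: "x \<in> K \<Longrightarrow> y \<in> K \<Longrightarrow> z \<in> K \<Longrightarrow> m (m x y) z = m x (m y z)"
  and join_meet_absorb: "x \<in> K \<Longrightarrow> y \<in> K \<Longrightarrow> j x (m x y) = x"
  and meet_join_absorb: "x \<in> K \<Longrightarrow> y \<in> K \<Longrightarrow> m x (j x y) = x"
  using is_lattice unfolding is_lattice_def by auto

lemma join_idem: "x \<in> K \<Longrightarrow> j x x = x"
  by (metis join_meet_absorb meet_join_absorb join_closed)

lemma meet_idem: "x \<in> K \<Longrightarrow> m x x = x"
  by (metis join_meet_absorb meet_join_absorb meet_closed)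

lemma le_iff_join: "x \<in> K \<Longrightarrow> y \<in> K \<Longrightarrow> x \<sqsubseteq> y \<longleftrightarrow> j x y = y"
  by (metis join_commute meet_commute join_meet_absorb meet_join_absorb)

lemma le_trans: "x \<in> K \<Longrightarrow> y \<in> K \<Longrightarrow> z \<in> K \<Longrightarrow> x \<sqsubseteq> y \<Longrightarrow> y \<sqsubseteq> z \<Longrightarrow> x \<sqsubseteq> z"
  by (metis meet_assoc)

lemma join_upper1: "x \<in> K \<Longrightarrow> y \<in> K \<Longrightarrow> x \<sqsubseteq> j x y"
  by (rule meet_join_absorb)

lemma join_upper2: "x \<in> K \<Longrightarrow> y \<in> K \<Longrightarrow> y \<sqsubseteq> j x y"
  by (metis meet_join_absorb join_commute)

lemma meet_lower1: "x \<in> K \<Longrightarrow> y \<in> K \<Longrightarrow> m x y \<sqsubseteq> x"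
  by (metis meet_assoc meet_commute meet_idem)

lemma meet_lower2: "x \<in> K \<Longrightarrow> y \<in> K \<Longrightarrow> m x y \<sqsubseteq> y"
  by (metis meet_assoc meet_idem)

lemma join_least: "x \<in> K \<Longrightarrow> y \<in> K \<Longrightarrow> z \<in> K \<Longrightarrow> x \<sqsubseteq> z \<Longrightarrow> y \<sqsubseteq> z \<Longrightarrow> j x y \<sqsubseteq> z"
  by (metis le_iff_join join_assoc join_closed)

lemma meet_greatest: "x \<in> K \<Longrightarrow> y \<in> K \<Longrightarrow> z \<in> K \<Longrightarrow> z \<sqsubseteq> x \<Longrightarrow> z \<sqsubseteq> y \<Longrightarrow> z \<sqsubseteq> m x y"
  by (metis meet_assoc)

lemma join_mono:
  "x \<in> K \<Longrightarrow> y \<in> K \<Longrightarrow> x' \<in> K \<Longrightarrow> y' \<in> K \<Longrightarrow> x \<sqsubseteq> x' \<Longrightarrow> y \<sqsubseteq> y' \<Longrightarrow> j x y \<sqsubseteq> j x' y'"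
  by (meson join_least le_trans join_upper1 join_upper2 join_closed)

lemma meet_mono:
  "x \<in> K \<Longrightarrow> y \<in> K \<Longrightarrow> x' \<in> K \<Longrightarrow> y' \<in> K \<Longrightarrow> x \<sqsubseteq> x' \<Longrightarrow> y \<sqsubseteq> y' \<Longrightarrow> m x y \<sqsubseteq> m x' y'"
  by (meson meet_greatest le_trans meet_lower1 meet_lower2 meet_closed)

end

locale lattice_tolerance = lattice_on +
  fixes \<tau> :: "('a \<times> 'a) set"
  assumes tolerance: "tolerance K j m \<tau>"
begin

lemma tolerance_subset: "(x, y) \<in> \<tau> \<Longrightarrow> x \<in> K \<and> y \<in> K"
  and tolerance_refl: "x \<in> K \<Longrightarrow> (x, x) \<in> \<tau>"
  and tolerance_sym: "(x, y) \<in> \<tau> \<Longrightarrow> (y, x) \<in> \<tau>"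
  and tolerance_join: "(a, b) \<in> \<tau> \<Longrightarrow> (c, d) \<in> \<tau> \<Longrightarrow> (j a c, j b d) \<in> \<tau>"
  and tolerance_meet: "(a, b) \<in> \<tau> \<Longrightarrow> (c, d) \<in> \<tau> \<Longrightarrow> (m a c, m b d) \<in> \<tau>"
  using tolerance unfolding tolerance_def by (auto dest: symD)

lemma tolerance_meet_join:
  assumes "(x, y) \<in> \<tau>"
  shows "(m x y, j x y) \<in> \<tau>"
proof -
  have x: "x \<in> K" and y: "y \<in> K" using assms tolerance_subset by auto
  have "(j (m x y) (m y x), j (m y y) (m x x)) \<in> \<tau>"
    using assms tolerance_sym[OF assms] tolerance_refl[OF x] tolerance_refl[OF y]
    by (blast intro: tolerance_join tolerance_meet)
  then show ?thesis
    using x y by (simp add: meet_commute[of y x] join_commute[of y x] meet_idem join_idem meet_closed)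
qed

lemma tolerance_interval_convex:
  assumes "(a, b) \<in> \<tau>" and "x \<in> K" "y \<in> K"
    and "a \<sqsubseteq> x" "x \<sqsubseteq> b" "a \<sqsubseteq> y" "y \<sqsubseteq> b"
  shows "(x, y) \<in> \<tau>"
proof -
  have a: "a \<in> K" using assms(1) tolerance_subset by auto
  have "(j (m x b) (m y a), j (m x a) (m y b)) \<in> \<tau>"
    using assms tolerance_sym[OF assms(1)] tolerance_refl[OF assms(2)] tolerance_refl[OF assms(3)]
    by (blast intro: tolerance_join tolerance_meet)
  moreover have "m x a = a" "m y a = a" "j x a = x" "j a y = y"
    using assms a by (simp_all add: meet_commute join_commute le_iff_join)
  ultimately show ?thesis using assms by simp
qed

text \<open>Triples are encoded as lists, the type the statement prescribes for this lattice.\<close>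

definition triples :: "'a list set" where
  "triples = {[x, a, b] | x a b. x \<in> K \<and> (a, b) \<in> \<tau> \<and> a \<sqsubseteq> x \<and> x \<sqsubseteq> b}"

lemma triplesI: "x \<in> K \<Longrightarrow> (a, b) \<in> \<tau> \<Longrightarrow> a \<sqsubseteq> x \<Longrightarrow> x \<sqsubseteq> b \<Longrightarrow> [x, a, b] \<in> triples"
  unfolding triples_def by blast

lemma triplesE:
  assumes "u \<in> triples"
  obtains x a b where "u = [x, a, b]" "x \<in> K" "a \<in> K" "b \<in> K" "(a, b) \<in> \<tau>" "a \<sqsubseteq> x" "x \<sqsubseteq> b"
  using assms tolerance_subset unfolding triples_def by blast

lemma triples_join_closed:
  assumes "u \<in> triples" "v \<in> triples"
  shows "map2 j u v \<in> triples"
proof -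
  obtain x a b where u: "u = [x, a, b]" "x \<in> K" "a \<in> K" "b \<in> K" "(a, b) \<in> \<tau>" "a \<sqsubseteq> x" "x \<sqsubseteq> b"
    using assms(1) by (rule triplesE)
  obtain y c d where v: "v = [y, c, d]" "y \<in> K" "c \<in> K" "d \<in> K" "(c, d) \<in> \<tau>" "c \<sqsubseteq> y" "y \<sqsubseteq> d"
    using assms(2) by (rule triplesE)
  have "[j x y, j a c, j b d] \<in> triples"
    by (rule triplesI[OF join_closed tolerance_join join_mono join_mono])
      (use u v in simp_all)
  then show ?thesis using u v by simp
qed

lemma triples_meet_closed:
  assumes "u \<in> triples" "v \<in> triples"
  shows "map2 m u v \<in> triples"
proof -
  obtain x a b where u: "u = [x, a, b]" "x \<in> K" "a \<in> K" "b \<in> K" "(a, b) \<in> \<tau>" "a \<sqsubseteq> x" "x \<sqsubseteq> b"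
    using assms(1) by (rule triplesE)
  obtain y c d where v: "v = [y, c, d]" "y \<in> K" "c \<in> K" "d \<in> K" "(c, d) \<in> \<tau>" "c \<sqsubseteq> y" "y \<sqsubseteq> d"
    using assms(2) by (rule triplesE)
  have "[m x y, m a c, m b d] \<in> triples"
    by (rule triplesI[OF meet_closed tolerance_meet meet_mono meet_mono])
      (use u v in simp_all)
  then show ?thesis using u v by simp
qed

lemma is_lattice_triples: "is_lattice triples (map2 j) (map2 m)"
  unfolding is_lattice_def
proof (intro conjI ballI)
  fix u v assume "u \<in> triples" "v \<in> triples"
  then show "map2 j u v \<in> triples" "map2 m u v \<in> triples"
    by (simp_all add: triples_join_closed triples_meet_closed)
next
  fix u v assume "u \<in> triples" "v \<in> triples"
  then show "map2 j u v = map2 j v u" "map2 m u v = map2 m v u"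
    and "map2 j u (map2 m u v) = u" "map2 m u (map2 j u v) = u"
    by (elim triplesE; simp add: join_commute meet_commute join_meet_absorb meet_join_absorb)+
next
  fix u v w assume "u \<in> triples" "v \<in> triples" "w \<in> triples"
  then show "map2 j (map2 j u v) w = map2 j u (map2 j v w)"
    and "map2 m (map2 m u v) w = map2 m u (map2 m v w)"
    by (elim triplesE; simp add: join_assoc meet_assoc)+
qed

lemma lattice_hom_hd_triples: "lattice_hom triples (map2 j) (map2 m) j m hd"
  unfolding lattice_hom_def by (auto elim!: triplesE)

lemma lattice_hom_tl_triples: "lattice_hom triples (map2 j) (map2 m) (map2 j) (map2 m) tl"
  unfolding lattice_hom_def by (auto elim!: triplesE)

lemma hd_image_triples: "hd ` triples = K"
proof
  show "hd ` triples \<subseteq> K" by (auto elim!: triplesE)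
  show "K \<subseteq> hd ` triples"
  proof
    fix x assume x: "x \<in> K"
    then have "[x, x, x] \<in> triples" by (simp add: triplesI tolerance_refl meet_idem)
    then show "x \<in> hd ` triples" by (metis image_eqI list.sel(1))
  qed
qed

lemma tolerance_eq_hd_kernel_tl:
  "\<tau> = {(hd u, hd v) | u v. u \<in> triples \<and> v \<in> triples \<and> (u, v) \<in> kernel_rel triples tl}"
proof (intro equalityI subsetI)
  fix p assume "p \<in> \<tau>"
  then obtain x y where p: "p = (x, y)" "(x, y) \<in> \<tau>" by (cases p) auto
  then have x: "x \<in> K" and y: "y \<in> K" using tolerance_subset by auto
  have "[x, m x y, j x y] \<in> triples" "[y, m x y, j x y] \<in> triples"
    using x y tolerance_meet_join[OF p(2)]
    by (simp_all add: triplesI meet_lower1 meet_lower2 join_upper1 join_upper2)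
  then show "p \<in> {(hd u, hd v) | u v. u \<in> triples \<and> v \<in> triples \<and> (u, v) \<in> kernel_rel triples tl}"
    by (intro CollectI exI[of _ "[x, m x y, j x y]"] exI[of _ "[y, m x y, j x y]"])
      (simp add: p(1) kernel_rel_def)
next
  fix p assume "p \<in> {(hd u, hd v) | u v. u \<in> triples \<and> v \<in> triples \<and> (u, v) \<in> kernel_rel triples tl}"
  then obtain u v where p: "p = (hd u, hd v)" and uv: "u \<in> triples" "v \<in> triples" "tl u = tl v"
    unfolding kernel_rel_def by blast
  obtain x a b where u: "u = [x, a, b]" "x \<in> K" "(a, b) \<in> \<tau>" "a \<sqsubseteq> x" "x \<sqsubseteq> b"
    using uv(1) by (rule triplesE)
  obtain y c d where v: "v = [y, c, d]" "y \<in> K" "c \<sqsubseteq> y" "y \<sqsubseteq> d"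
    using uv(2) by (rule triplesE)
  have "c = a" "d = b" using u(1) v(1) uv(3) by simp_all
  then show "p \<in> \<tau>"
    unfolding p u(1) v(1) using tolerance_interval_convex[OF u(3) u(2) v(2) u(4,5)] v(3,4) by simp
qed

theorem tolerance_as_quotient:
  "\<exists>(L :: 'a list set) jL mL \<alpha> \<gamma> \<phi>.
     is_lattice L jL mL \<and> congruence L jL mL \<alpha> \<and> congruence L jL mL \<gamma> \<and>
     lattice_iso (L // \<gamma>) (quot_op \<gamma> jL) (quot_op \<gamma> mL) K j m \<phi> \<and>
     \<tau> = {(\<phi> X, \<phi> Y) | X Y. (X, Y) \<in> rel_quot L \<alpha> \<gamma>}"
proof -
  let ?\<alpha> = "kernel_rel triples tl" and ?\<gamma> = "kernel_rel triples hd"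
  have "lattice_iso (triples // ?\<gamma>) (quot_op ?\<gamma> (map2 j)) (quot_op ?\<gamma> (map2 m)) K j m (class_map hd)"
    using is_lattice_triples lattice_hom_hd_triples hd_image_triples
    by (rule lattice_iso_quotient_kernel)
  moreover have "\<tau> = {(class_map hd X, class_map hd Y) | X Y. (X, Y) \<in> rel_quot triples ?\<alpha> ?\<gamma>}"
    unfolding image_rel_quot_kernel by (rule tolerance_eq_hd_kernel_tl)
  ultimately show ?thesis
    using is_lattice_triples congruence_kernel_rel[OF is_lattice_triples lattice_hom_tl_triples]
      congruence_kernel_rel[OF is_lattice_triples lattice_hom_hd_triples]
    by (intro exI[of _ triples] exI[of _ "map2 j"] exI[of _ "map2 m"] exI[of _ ?\<alpha>]
        exI[of _ ?\<gamma>] exI[of _ "class_map hd"] conjI)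
qed

end

theorem theorem2:
  shows
   "(\<forall>(L :: 'a set) j m \<gamma> \<alpha>.
       is_lattice L j m \<and> congruence L j m \<gamma> \<and> congruence L j m \<alpha> \<longrightarrow>
       tolerance (L // \<gamma>) (quot_op \<gamma> j) (quot_op \<gamma> m) (rel_quot L \<alpha> \<gamma>))
    \<and>
    (\<forall>(K :: 'b set) j m \<tau>.
       is_lattice K j m \<and> tolerance K j m \<tau> \<longrightarrow>
       (\<exists>(L :: 'b list set) jL mL \<alpha> \<gamma> \<phi>.
          is_lattice L jL mL \<and> congruence L jL mL \<alpha> \<and> congruence L jL mL \<gamma> \<and>
          lattice_iso (L // \<gamma>) (quot_op \<gamma> jL) (quot_op \<gamma> mL) K j m \<phi> \<and>
          \<tau> = {(\<phi> X, \<phi> Y) | X Y. (X, Y) \<in> rel_quot L \<alpha> \<gamma>}))"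
proof (intro conjI allI impI)
  fix L :: "'a set" and j m \<gamma> \<alpha>
  assume "is_lattice L j m \<and> congruence L j m \<gamma> \<and> congruence L j m \<alpha>"
  then show "tolerance (L // \<gamma>) (quot_op \<gamma> j) (quot_op \<gamma> m) (rel_quot L \<alpha> \<gamma>)"
    by (blast intro: tolerance_rel_quot)
next
  fix K :: "'b set" and j m \<tau>
  assume "is_lattice K j m \<and> tolerance K j m \<tau>"
  then have "lattice_tolerance K j m \<tau>"
    by (simp add: lattice_tolerance_def lattice_tolerance_axioms_def lattice_on_def)
  then show "\<exists>(L :: 'b list set) jL mL \<alpha> \<gamma> \<phi>.
          is_lattice L jL mL \<and> congruence L jL mL \<alpha> \<and> congruence L jL mL \<gamma> \<and>
          lattice_iso (L // \<gamma>) (quot_op \<gamma> jL) (quot_op \<gamma> mL) K j m \<phi> \<and>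
          \<tau> = {(\<phi> X, \<phi> Y) | X Y. (X, Y) \<in> rel_quot L \<alpha> \<gamma>}"
    by (rule lattice_tolerance.tolerance_as_quotient)
qed

end
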